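(* Let $N\ge 2$, $m\ge N$, $\theta>0$, and let $\rho_\kappa=\Upsilon(\kappa,\gamma_r,m)$, $\kappa=1,\dots,m$, be request probabilities (nonnegative, summing to $1$) given by a popularity distribution $\Upsilon$ with skew exponent $\gamma_r$. With the caching/request model, operating modes, mode probabilities $\mathcal{P}_\Delta$, transmission probability $\mathcal{P}_{\textup{TX}}$ and interference model described in the context, the success probability of an arbitrary node satisfies \[ \textup{P}_{\rm s}(N,\gamma_r,\theta)=\frac{1}{N}\mathcal{P}_{\textup{hit}}+\sum_{n_t=1}^{N}\left(\mathcal{P}_{\textup{HDRX}}\,\mathcal{L}_{\mathcal{I},\textup{HDRX}}(\theta;n_t)+\mathcal{P}_{\textup{FDTR}}\,\mathcal{L}_{\mathcal{I},\textup{FDTR}}(\theta;n_t)\right)\binom{N}{n_t}\mathcal{P}_{\textup{TX}}^{\,n_t}\left(1-\mathcal{P}_{\textup{TX}}\right)^{N-n_t}, \] where $\mathcal{P}_{\textup{hit}}=\sum_{\kappa=1}^N\rho_\kappa$.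
   Context: Caching/request model: users $u_1,\dots,u_N$; $u_\kappa$ caches only content $c_\kappa$ of a library $c_1,\dots,c_m$; each user $u_\mu$ independently requests one content $R_\mu$ with $\Pr(R_\mu=c_\ell)=\rho_\ell$; $K$ is uniform on $\{1,\dots,N\}$ independent of requests. Let $S_\kappa$ be the event that some $u_\mu$, $\mu\ne\kappa$, requests $c_\kappa$. Modes of $u_\kappa$: SR: $R_\kappa=c_\kappa$ and not $S_\kappa$; SR-HDTX: $R_\kappa=c_\kappa$ and $S_\kappa$; FDTR: $R_\kappa=c_\mu$ for some $\mu\ne\kappa$, $\mu\le N$, and $S_\kappa$; HDRX: $R_\kappa=c_\mu$ for some $\mu\ne\kappa$, $\mu\le N$, and not $S_\kappa$; HDTX: $R_\kappa\notin\{c_1,\dots,c_N\}$ and $S_\kappa$. $\mathcal{P}_\Delta$ is the probability that $u_K$ is in mode $\Delta$, and $\mathcal{P}_{\textup{TX}}=\mathcal{P}_{\textup{SR-HDTX}}+\mathcal{P}_{\textup{HDTX}}+\mathcal{P}_{\textup{FDTR}}$. Interference model: fix $\mathcal{R}>0$, $\alpha>2$, $\beta\in[0,1]$. For an integer $n_t\ge1$ and $\delta\in\{\textup{HDRX},\textup{FDTR}\}$, let $\mathbf{x}_0,\mathbf{y}_0,\mathbf{y}_1,\dots,\mathbf{y}_{n_t-1},\mathbf{x}_1,\dots,\mathbf{x}_{n_t-1}$ be independent uniform points in the disk of radius $\mathcal{R}$ centered at the origin, $h_0,h_1,\dots,h_{n_t-1}$ i.i.d. exponential with mean $1$ independent of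 the points, $Z_0=\|\mathbf{y}_0-\mathbf{x}_0\|$, $Z_i=\|\mathbf{y}_i-\mathbf{x}_i\|$, $W_i=\|\mathbf{y}_i-\mathbf{x}_0\|$, $\mathbbm{1}_\delta=1$ for FDTR and $0$ for HDRX, $\mathcal{I}_\delta=\sum_{i=1}^{n_t-1}(h_iZ_i^\alpha W_i^{-\alpha}+\mathbbm{1}_\delta\beta Z_0^\alpha)$, $\mathtt{SIR}_\delta=h_0/\mathcal{I}_\delta$, and $\mathcal{L}_{\mathcal{I},\delta}(s;n_t)=\mathbb{E}[e^{-s\mathcal{I}_\delta}]$. The number of concurrent transmitters $N_t$ is modeled as Binomial$(N,\mathcal{P}_{\textup{TX}})$. Success probability: $\textup{P}_{\rm s}(N,\gamma_r,\theta)$ is the probability that the arbitrary node $u_K$ either finds its desired content in its own cache (modes SR or SR-HDTX) or is a receiver in mode $\delta\in\{\textup{HDRX},\textup{FDTR}\}$ whose $\mathtt{SIR}_\delta$ (with $n_t=N_t$ transmitters, averaged over $N_t\in\{1,\dots,N\}$ with the binomial weights, the mode being independent of the $\mathtt{SIR}$) is at least $\theta$; i.e. $\textup{P}_{\rm s}=\mathcal{P}_{\textup{SR}}+\mathcal{P}_{\textup{SR-HDTX}}+\sum_{n_t=1}^N\binom{N}{n_t}\mathcal{P}_{\textup{TX}}^{n_t}(1-\mathcal{P}_{\textup{TX}})^{N-n_t}\sum_{\delta}\mathcal{P}_\delta\Pr(\mathtt{SIR}_\delta\ge\theta\mid N_t=n_t)$. *)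

theory Defs
  imports "HOL-Probability.Probability"
begin

text \<open>Users are indexed 1..N, contents 1..m; user k caches content k.
  A request profile is a function r with r mu in {1..m} for mu in {1..N}
  (extensional, i.e. an element of PiE).\<close>

datatype mode = SR | SR_HDTX | FDTR | HDRX | HDTX

definition S_ev :: "nat \<Rightarrow> (nat \<Rightarrow> nat) \<Rightarrow> nat \<Rightarrow> bool" where
  "S_ev N r k \<longleftrightarrow> (\<exists>mu\<in>{1..N}. mu \<noteq> k \<and> r mu = k)"

definition in_mode :: "nat \<Rightarrow> (nat \<Rightarrow> nat) \<Rightarrow> nat \<Rightarrow> mode \<Rightarrow> bool" where
  "in_mode N r k d = (case d of
      SR \<Rightarrow> r k = k \<and> \<not> S_ev N r k
    | SR_HDTX \<Rightarrow> r k = k \<and> S_ev N r k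
    | FDTR \<Rightarrow> (\<exists>mu\<in>{1..N}. mu \<noteq> k \<and> r k = mu) \<and> S_ev N r k
    | HDRX \<Rightarrow> (\<exists>mu\<in>{1..N}. mu \<noteq> k \<and> r k = mu) \<and> \<not> S_ev N r k
    | HDTX \<Rightarrow> r k \<notin> {1..N} \<and> S_ev N r k)"

text \<open>Probability that u_K is in mode d: K uniform on {1..N}, requests independent
  with law rho on {1..m}.\<close>
definition mode_prob :: "nat \<Rightarrow> nat \<Rightarrow> (nat \<Rightarrow> real) \<Rightarrow> mode \<Rightarrow> real" where
  "mode_prob N m rho d =
     (1 / real N) * (\<Sum>k\<in>{1..N}. \<Sum>r\<in>PiE {1..N} (\<lambda>_. {1..m}).
        (\<Prod>mu\<in>{1..N}. rho (r mu)) * (if in_mode N r k d then 1 else 0))"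

definition P_TX :: "nat \<Rightarrow> nat \<Rightarrow> (nat \<Rightarrow> real) \<Rightarrow> real" where
  "P_TX N m rho = mode_prob N m rho SR_HDTX + mode_prob N m rho HDTX + mode_prob N m rho FDTR"

text \<open>Points in the plane are complex numbers. Sample point (xs, ys, hs) with
  xs i, ys i uniform in the disk (x_0 = xs 0, y_0 = ys 0) and hs i Exp(1),
  all independent, for i < n_t.\<close>

definition disk_unif :: "real \<Rightarrow> complex measure" where
  "disk_unif Rr = uniform_measure lborel (cball 0 Rr)"

definition exp1 :: "real measure" where
  "exp1 = density lborel (exponential_density 1)"

definition intf_space :: "real \<Rightarrow> nat \<Rightarrow>
    ((nat \<Rightarrow> complex) \<times> (nat \<Rightarrow> complex) \<times> (nat \<Rightarrow> real)) measure" where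
  "intf_space Rr nt = (PiM {0..<nt} (\<lambda>_. disk_unif Rr)) \<Otimes>\<^sub>M
     ((PiM {0..<nt} (\<lambda>_. disk_unif Rr)) \<Otimes>\<^sub>M (PiM {0..<nt} (\<lambda>_. exp1)))"

definition interference :: "real \<Rightarrow> real \<Rightarrow> mode \<Rightarrow> nat \<Rightarrow>
    (nat \<Rightarrow> complex) \<times> (nat \<Rightarrow> complex) \<times> (nat \<Rightarrow> real) \<Rightarrow> real" where
  "interference \<alpha> \<beta> d nt \<omega> = (case \<omega> of (xs, ys, hs) \<Rightarrow>
     (\<Sum>i\<in>{1..<nt}. hs i * (cmod (ys i - xs i)) powr \<alpha> * (cmod (ys i - xs 0)) powr (- \<alpha>)
        + (if d = FDTR then 1 else 0) * \<beta> * (cmod (ys 0 - xs 0)) powr \<alpha>))"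

definition SIR :: "real \<Rightarrow> real \<Rightarrow> mode \<Rightarrow> nat \<Rightarrow>
    (nat \<Rightarrow> complex) \<times> (nat \<Rightarrow> complex) \<times> (nat \<Rightarrow> real) \<Rightarrow> ereal" where
  "SIR \<alpha> \<beta> d nt \<omega> = (let I = interference \<alpha> \<beta> d nt \<omega> in
     if I = 0 then \<infinity> else ereal (snd (snd \<omega>) 0 / I))"

definition cov_prob :: "real \<Rightarrow> real \<Rightarrow> real \<Rightarrow> mode \<Rightarrow> real \<Rightarrow> nat \<Rightarrow> real" where
  "cov_prob Rr \<alpha> \<beta> d \<theta> nt =
     measure (intf_space Rr nt) {\<omega> \<in> space (intf_space Rr nt). SIR \<alpha> \<beta> d nt \<omega> \<ge> ereal \<theta>}"

definition laplace_I :: "real \<Rightarrow> real \<Rightarrow> real \<Rightarrow> mode \<Rightarrow> real \<Rightarrow> nat \<Rightarrow> real" where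
  "laplace_I Rr \<alpha> \<beta> d s nt =
     integral\<^sup>L (intf_space Rr nt) (\<lambda>\<omega>. exp (- s * interference \<alpha> \<beta> d nt \<omega>))"

definition succ_prob :: "nat \<Rightarrow> nat \<Rightarrow> (nat \<Rightarrow> real) \<Rightarrow> real \<Rightarrow> real \<Rightarrow> real \<Rightarrow> real \<Rightarrow> real" where
  "succ_prob N m rho Rr \<alpha> \<beta> \<theta> =
     mode_prob N m rho SR + mode_prob N m rho SR_HDTX
     + (\<Sum>nt=1..N. real (N choose nt) * P_TX N m rho ^ nt * (1 - P_TX N m rho) ^ (N - nt)
          * (\<Sum>d\<in>{HDRX, FDTR}. mode_prob N m rho d * cov_prob Rr \<alpha> \<beta> d \<theta> nt))"

end

theory Submission
  imports Defs "HOL-Analysis.Ball_Volume"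
begin

text \<open>A node finds its content in its
  own cache exactly when it requests its own cached item, which it does with probability
  \<open>\<rho>\<^sub>\<kappa>\<close> regardless of the other users. A receiving node succeeds when \<open>h\<^sub>0 \<ge> \<theta> \<I>\<close>; as
  \<open>h\<^sub>0\<close> is Exp(1) and independent of \<open>\<I>\<close>, conditioning on \<open>\<I>\<close> gives \<open>e\<^sup>-\<^sup>\<theta>\<^sup>\<I>\<close>, whose
  mean is the Laplace transform \<open>\<L>\<^sub>\<I>(\<theta>)\<close>.\<close>

lemma sum_PiE_prod_coordinate_eq:
  fixes \<rho> :: "'b \<Rightarrow> 'c::comm_ring_1"
  assumes "finite I" "finite A" "k \<in> I" "j \<in> A"
  shows "(\<Sum>r\<in>PiE I (\<lambda>_. A). (\<Prod>i\<in>I. \<rho> (r i)) * (if r k = j then 1 else 0))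
           = \<rho> j * (\<Sum>a\<in>A. \<rho> a) ^ (card I - 1)"
proof -
  define g where "g i a = (if i = k \<and> a \<noteq> j then 0 else \<rho> a)" for i a
  have "(\<Sum>r\<in>PiE I (\<lambda>_. A). (\<Prod>i\<in>I. \<rho> (r i)) * (if r k = j then 1 else 0))
      = (\<Sum>r\<in>PiE I (\<lambda>_. A). \<Prod>i\<in>I. g i (r i))"
  proof (rule sum.cong[OF refl])
    fix r
    have split: "(\<Prod>i\<in>I. f i) = f k * (\<Prod>i\<in>I - {k}. f i)" for f :: "'a \<Rightarrow> 'c"
      using assms by (simp add: prod.remove)
    show "(\<Prod>i\<in>I. \<rho> (r i)) * (if r k = j then 1 else 0) = (\<Prod>i\<in>I. g i (r i))"
      unfolding split[of "\<lambda>i. \<rho> (r i)"] split[of "\<lambda>i. g i (r i)"]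
      by (auto simp: g_def intro!: prod.cong)
  qed
  also have "\<dots> = (\<Prod>i\<in>I. \<Sum>a\<in>A. g i a)"
    by (rule prod_sum_PiE[symmetric]) (use assms in auto)
  also have "\<dots> = (\<Sum>a\<in>A. g k a) * (\<Prod>i\<in>I - {k}. \<Sum>a\<in>A. g i a)"
    using assms by (simp add: prod.remove)
  also have "(\<Sum>a\<in>A. g k a) = \<rho> j"
  proof -
    have "(\<Sum>a\<in>A. g k a) = (\<Sum>a\<in>A. if a = j then \<rho> a else 0)"
      by (rule sum.cong) (auto simp: g_def)
    then show ?thesis using assms by simp
  qed
  also have "(\<Prod>i\<in>I - {k}. \<Sum>a\<in>A. g i a) = (\<Sum>a\<in>A. \<rho> a) ^ (card I - 1)"
    using assms by (simp add: g_def card_Diff_singleton)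
  finally show ?thesis .
qed

lemma mode_prob_own_content:
  assumes "N \<le> m" and "(\<Sum>j=1..m. \<rho> j) = 1"
  shows "mode_prob N m \<rho> SR + mode_prob N m \<rho> SR_HDTX = 1 / real N * (\<Sum>k=1..N. \<rho> k)"
proof -
  have "mode_prob N m \<rho> SR + mode_prob N m \<rho> SR_HDTX =
    1 / real N * (\<Sum>k\<in>{1..N}. \<Sum>r\<in>PiE {1..N} (\<lambda>_. {1..m}).
      (\<Prod>mu\<in>{1..N}. \<rho> (r mu)) * (if r k = k then 1 else 0))"
    unfolding mode_prob_def distrib_left[symmetric] sum.distrib[symmetric]
    by (auto intro!: sum.cong arg_cong[where f="\<lambda>x. _ * x"] simp: in_mode_def)
  also have "\<dots> = 1 / real N * (\<Sum>k=1..N. \<rho> k)"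
    using assms by (auto intro!: sum.cong arg_cong[where f="\<lambda>x. _ * x"]
        simp: sum_PiE_prod_coordinate_eq)
  finally show ?thesis .
qed

lemma prob_space_disk_unif: "0 < Rr \<Longrightarrow> prob_space (disk_unif Rr)"
  unfolding disk_unif_def
proof (rule prob_space_uniform_measure)
  assume "0 < Rr"
  have "emeasure lborel (cball (0::complex) Rr)
      = ennreal (unit_ball_vol (real DIM(complex)) * Rr ^ DIM(complex))"
    by (rule emeasure_cball) (use \<open>0 < Rr\<close> in simp)
  moreover have "0 < unit_ball_vol (real DIM(complex)) * Rr ^ DIM(complex)"
    using \<open>0 < Rr\<close> by (simp add: unit_ball_vol_pos)
  ultimately show "emeasure lborel (cball (0::complex) Rr) \<noteq> 0"
    by (metis ennreal_eq_0_iff not_le)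
  show "emeasure lborel (cball (0::complex) Rr) \<noteq> \<infinity>"
    using emeasure_lborel_cball_finite[of "0::complex" Rr] by simp
qed

lemma prob_space_exp1: "prob_space exp1"
  unfolding exp1_def by (rule prob_space_exponential_density) simp

lemma sets_exp1 [measurable_cong, simp]: "sets exp1 = sets lborel"
  by (simp add: exp1_def)

lemma sets_disk_unif [measurable_cong, simp]: "sets (disk_unif Rr) = sets lborel"
  by (simp add: disk_unif_def)

lemma emeasure_exp1_atLeast:
  assumes "0 \<le> a"
  shows "emeasure exp1 {a..} = ennreal (exp (- a))"
proof -
  interpret prob_space exp1 by (rule prob_space_exp1)
  have "distributed exp1 lborel (\<lambda>x. x) (exponential_density 1)"
    by (auto simp: distributed_def exp1_def distr_id2)
  then have "prob {x \<in> space exp1. a < x} = exp (- a)"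
    using exponential_distributedD_gt[OF _ assms] by simp
  moreover have "emeasure exp1 {a} = 0"
    unfolding exp1_def
    by (subst emeasure_density) (auto intro!: nn_integral_null_set simp: null_sets_def)
  moreover have "{a..} = {x \<in> space exp1. a < x} \<union> {a}"
    by (auto simp: exp1_def)
  then have "emeasure exp1 {a..} = emeasure exp1 {x \<in> space exp1. a < x} + emeasure exp1 {a}"
    by (subst plus_emeasure) (auto simp: exp1_def)
  ultimately show ?thesis
    by (simp add: emeasure_eq_measure)
qed

lemma AE_PiM_exp1_nonneg:
  assumes "finite I"
  shows "AE x in PiM I (\<lambda>_. exp1). \<forall>i\<in>I. 0 \<le> x i"
proof -
  have "AE y in exp1. 0 \<le> y"
    unfolding exp1_def by (subst AE_density) (auto simp: exponential_density_def)
  then show ?thesis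
    using assms by (intro eventually_ball_finite ballI AE_PiM_component prob_space_exp1) auto
qed

lemma nn_integral_exp1_ge_eq_exp:
  fixes g :: "('a \<Rightarrow> real) \<Rightarrow> real"
  assumes "finite J" "i \<notin> J" "0 < \<theta>"
    and g_meas [measurable]: "g \<in> borel_measurable (PiM (insert i J) (\<lambda>_. exp1))"
    and g_upd: "\<And>x y. g (x(i := y)) = g x"
    and g_nonneg: "AE x in PiM J (\<lambda>_. exp1). 0 \<le> g x"
  shows "(\<integral>\<^sup>+ x. (if \<theta> * g x \<le> x i then 1 else 0) \<partial>PiM (insert i J) (\<lambda>_. exp1))
       = (\<integral>\<^sup>+ x. ennreal (exp (- \<theta> * g x)) \<partial>PiM (insert i J) (\<lambda>_. exp1))"
proof -
  interpret P: product_prob_space "\<lambda>_. exp1" UNIV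
    by (simp add: product_prob_space_def product_prob_space_axioms_def
        product_sigma_finite_def prob_space_exp1 prob_space_imp_sigma_finite)
  interpret prob_space exp1 by (rule prob_space_exp1)
  have [measurable]: "i \<in> insert i J" by simp
  have "(\<integral>\<^sup>+ y. (if \<theta> * g (x(i := y)) \<le> y then 1 else 0) \<partial>exp1)
      = (\<integral>\<^sup>+ y. ennreal (exp (- \<theta> * g (x(i := y)))) \<partial>exp1)" if "0 \<le> g x" for x
  proof -
    have "(\<integral>\<^sup>+ y. (if \<theta> * g (x(i := y)) \<le> y then 1 else 0) \<partial>exp1)
        = (\<integral>\<^sup>+ y. indicator {\<theta> * g x..} y \<partial>exp1)"
      by (intro nn_integral_cong) (simp add: g_upd indicator_def)
    also have "\<dots> = ennreal (exp (- (\<theta> * g x)))"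
      using \<open>0 < \<theta>\<close> \<open>0 \<le> g x\<close> by (simp add: emeasure_exp1_atLeast)
    finally show ?thesis
      by (simp add: g_upd prob_space.emeasure_space_1[OF prob_space_exp1])
  qed
  then show ?thesis
    using assms g_nonneg
    by (simp add: P.product_nn_integral_insert) (auto intro!: nn_integral_cong_AE elim!: eventually_mono)
qed

lemma interference_fun_upd_fading:
  "interference \<alpha> \<beta> d nt (xs, ys, hs(0 := y)) = interference \<alpha> \<beta> d nt (xs, ys, hs)"
  unfolding interference_def by (auto intro!: sum.cong)

lemma interference_nonneg:
  "\<lbrakk>\<forall>i\<in>{1..<nt}. 0 \<le> hs i; 0 \<le> \<beta>\<rbrakk> \<Longrightarrow> 0 \<le> interference \<alpha> \<beta> d nt (xs, ys, hs)"
  unfolding interference_def by (auto intro!: sum_nonneg)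

lemma SIR_ge_iff:
  assumes "0 < \<theta>" "0 \<le> \<beta>" "0 < nt" "\<forall>i\<in>{0..<nt}. 0 \<le> hs i"
  shows "SIR \<alpha> \<beta> d nt (xs, ys, hs) \<ge> ereal \<theta>
     \<longleftrightarrow> \<theta> * interference \<alpha> \<beta> d nt (xs, ys, hs) \<le> hs 0"
proof (cases "interference \<alpha> \<beta> d nt (xs, ys, hs) = 0")
  case False
  moreover have "0 \<le> interference \<alpha> \<beta> d nt (xs, ys, hs)"
    using assms by (intro interference_nonneg) auto
  ultimately show ?thesis
    by (simp add: SIR_def pos_le_divide_eq mult.commute)
next
  case True
  then show ?thesis
    using assms by (auto simp: SIR_def)
qed

lemma measurable_interference_fading [measurable]:
  "(\<lambda>hs. interference \<alpha> \<beta> d nt (xs, ys, hs)) \<in> borel_measurable (PiM {0..<nt} (\<lambda>_. exp1))"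
  unfolding interference_def by simp measurable

lemma measurable_interference [measurable]:
  "interference \<alpha> \<beta> d nt \<in> borel_measurable (intf_space Rr nt)"
  unfolding interference_def intf_space_def by measurable

lemma measurable_SIR [measurable]:
  assumes "0 < nt"
  shows "SIR \<alpha> \<beta> d nt \<in> borel_measurable (intf_space Rr nt)"
proof -
  have [measurable]: "0 \<in> {0..<nt}" using assms by simp
  note [measurable] = measurable_interference[of \<alpha> \<beta> d nt Rr, unfolded intf_space_def]
  show ?thesis unfolding SIR_def Let_def intf_space_def by measurable
qed

lemma nn_integral_intf_space:
  fixes f :: "(nat \<Rightarrow> complex) \<times> (nat \<Rightarrow> complex) \<times> (nat \<Rightarrow> real) \<Rightarrow> ennreal"
  assumes "0 < Rr" and f_meas: "f \<in> borel_measurable (intf_space Rr nt)"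
  shows "integral\<^sup>N (intf_space Rr nt) f =
    (\<integral>\<^sup>+ xs. \<integral>\<^sup>+ ys. \<integral>\<^sup>+ hs. f (xs, ys, hs)
       \<partial>PiM {0..<nt} (\<lambda>_. exp1) \<partial>PiM {0..<nt} (\<lambda>_. disk_unif Rr) \<partial>PiM {0..<nt} (\<lambda>_. disk_unif Rr))"
proof -
  let ?X = "PiM {0..<nt} (\<lambda>_. disk_unif Rr)" and ?H = "PiM {0..<nt} (\<lambda>_. exp1)"
  have X: "prob_space ?X" by (intro prob_space_PiM prob_space_disk_unif \<open>0 < Rr\<close>)
  have H: "prob_space ?H" by (intro prob_space_PiM prob_space_exp1)
  have XH: "sigma_finite_measure (?X \<Otimes>\<^sub>M ?H)"
    using X H by (intro prob_space_imp_sigma_finite prob_space_pair)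
  have [measurable]: "f \<in> borel_measurable (?X \<Otimes>\<^sub>M (?X \<Otimes>\<^sub>M ?H))"
    using f_meas unfolding intf_space_def .
  have "integral\<^sup>N (intf_space Rr nt) f = (\<integral>\<^sup>+ xs. \<integral>\<^sup>+ z. f (xs, z) \<partial>(?X \<Otimes>\<^sub>M ?H) \<partial>?X)"
    unfolding intf_space_def
    by (rule sigma_finite_measure.nn_integral_fst[symmetric, OF XH]) measurable
  also have "\<dots> = (\<integral>\<^sup>+ xs. \<integral>\<^sup>+ ys. \<integral>\<^sup>+ hs. f (xs, ys, hs) \<partial>?H \<partial>?X \<partial>?X)"
    by (intro nn_integral_cong sigma_finite_measure.nn_integral_fst[symmetric]
        prob_space_imp_sigma_finite H) measurable
  finally show ?thesis .
qed

lemma cov_prob_eq_laplace_I: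
  assumes "0 < nt" "0 < \<theta>" "0 \<le> \<beta>" "0 < Rr"
  shows "cov_prob Rr \<alpha> \<beta> d \<theta> nt = laplace_I Rr \<alpha> \<beta> d \<theta> nt"
proof -
  let ?J = "intf_space Rr nt" and ?H = "PiM {0..<nt} (\<lambda>_. exp1)"
    and ?X = "PiM {0..<nt} (\<lambda>_. disk_unif Rr)"
  have [measurable]: "0 \<in> {0..<nt}" using \<open>0 < nt\<close> by simp
  have fibre: "(\<integral>\<^sup>+ hs. indicator {\<omega> \<in> space ?J. SIR \<alpha> \<beta> d nt \<omega> \<ge> ereal \<theta>} (xs, ys, hs) \<partial>?H)
      = (\<integral>\<^sup>+ hs. ennreal (exp (- \<theta> * interference \<alpha> \<beta> d nt (xs, ys, hs))) \<partial>?H)"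
    if "xs \<in> space ?X" "ys \<in> space ?X" for xs ys
  proof -
    have range: "insert 0 {1..<nt} = {0..<nt}" using \<open>0 < nt\<close> by auto
    have "(\<integral>\<^sup>+ hs. indicator {\<omega> \<in> space ?J. SIR \<alpha> \<beta> d nt \<omega> \<ge> ereal \<theta>} (xs, ys, hs) \<partial>?H)
        = (\<integral>\<^sup>+ hs. (if \<theta> * interference \<alpha> \<beta> d nt (xs, ys, hs) \<le> hs 0 then 1 else 0) \<partial>?H)"
      using AE_PiM_exp1_nonneg[of "{0..<nt}"]
      by (intro nn_integral_cong_AE)
         (auto elim!: eventually_mono simp: indicator_def SIR_ge_iff assms(1-3) that
           intf_space_def space_pair_measure)
    also have "\<dots> = (\<integral>\<^sup>+ hs. ennreal (exp (- \<theta> * interference \<alpha> \<beta> d nt (xs, ys, hs))) \<partial>?H)"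
      using nn_integral_exp1_ge_eq_exp[of "{1..<nt}" 0 \<theta> "\<lambda>hs. interference \<alpha> \<beta> d nt (xs, ys, hs)",
          unfolded range] AE_PiM_exp1_nonneg[of "{1..<nt}"] assms
      by (simp add: interference_fun_upd_fading interference_nonneg eventually_mono)
    finally show ?thesis .
  qed
  have "emeasure ?J {\<omega> \<in> space ?J. SIR \<alpha> \<beta> d nt \<omega> \<ge> ereal \<theta>}
      = (\<integral>\<^sup>+ \<omega>. indicator {\<omega> \<in> space ?J. SIR \<alpha> \<beta> d nt \<omega> \<ge> ereal \<theta>} \<omega> \<partial>?J)"
    using \<open>0 < nt\<close> by (intro nn_integral_indicator[symmetric]) measurable
  also have "\<dots> = (\<integral>\<^sup>+ xs. \<integral>\<^sup>+ ys. \<integral>\<^sup>+ hs.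
      indicator {\<omega> \<in> space ?J. SIR \<alpha> \<beta> d nt \<omega> \<ge> ereal \<theta>} (xs, ys, hs) \<partial>?H \<partial>?X \<partial>?X)"
    using \<open>0 < nt\<close> by (intro nn_integral_intf_space \<open>0 < Rr\<close>) measurable
  also have "\<dots> = (\<integral>\<^sup>+ xs. \<integral>\<^sup>+ ys. \<integral>\<^sup>+ hs.
      ennreal (exp (- \<theta> * interference \<alpha> \<beta> d nt (xs, ys, hs))) \<partial>?H \<partial>?X \<partial>?X)"
    by (intro nn_integral_cong fibre)
  also have "\<dots> = (\<integral>\<^sup>+ \<omega>. ennreal (exp (- \<theta> * interference \<alpha> \<beta> d nt \<omega>)) \<partial>?J)"
    by (intro nn_integral_intf_space[symmetric] \<open>0 < Rr\<close>) simp
  finally show ?thesis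
    unfolding cov_prob_def laplace_I_def measure_def
    by (subst integral_eq_nn_integral) auto
qed

theorem theorem2:
  fixes N m :: nat and \<theta> \<gamma>r Rr \<alpha> \<beta> :: real
    and \<Upsilon> :: "nat \<Rightarrow> real \<Rightarrow> nat \<Rightarrow> real"
  assumes "N \<ge> 2" and "m \<ge> N" and "\<theta> > 0"
    and "Rr > 0" and "\<alpha> > 2" and "0 \<le> \<beta>" and "\<beta> \<le> 1"
    and "\<forall>k\<in>{1..m}. \<Upsilon> k \<gamma>r m \<ge> 0"
    and "(\<Sum>k=1..m. \<Upsilon> k \<gamma>r m) = 1"
  shows "succ_prob N m (\<lambda>k. \<Upsilon> k \<gamma>r m) Rr \<alpha> \<beta> \<theta> =
     1 / real N * (\<Sum>k=1..N. \<Upsilon> k \<gamma>r m)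
     + (\<Sum>nt=1..N.
         (mode_prob N m (\<lambda>k. \<Upsilon> k \<gamma>r m) HDRX * laplace_I Rr \<alpha> \<beta> HDRX \<theta> nt
          + mode_prob N m (\<lambda>k. \<Upsilon> k \<gamma>r m) FDTR * laplace_I Rr \<alpha> \<beta> FDTR \<theta> nt)
         * real (N choose nt) * P_TX N m (\<lambda>k. \<Upsilon> k \<gamma>r m) ^ nt
         * (1 - P_TX N m (\<lambda>k. \<Upsilon> k \<gamma>r m)) ^ (N - nt))"
proof -
  let ?\<rho> = "\<lambda>k. \<Upsilon> k \<gamma>r m"
  have own: "mode_prob N m ?\<rho> SR + mode_prob N m ?\<rho> SR_HDTX = 1 / real N * (\<Sum>k=1..N. ?\<rho> k)"
    using assms by (intro mode_prob_own_content) auto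
  have cov: "cov_prob Rr \<alpha> \<beta> d \<theta> nt = laplace_I Rr \<alpha> \<beta> d \<theta> nt" if "nt \<in> {1..N}" for d nt
    using that assms by (intro cov_prob_eq_laplace_I) auto
  show ?thesis
    unfolding succ_prob_def own
    by (auto intro!: sum.cong simp: cov algebra_simps)
qed

end
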